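(* Let $n\geq 2$, $\lambda>0$, $\rho>1$, and let $X_1,\ldots,X_n$ be i.i.d. $\mathrm{Exp}(\lambda)$ (density $\lambda e^{-\lambda x}$ on $(0,\infty)$). Let $X_{(1)}\le\cdots\le X_{(n)}$ be the order statistics and \[M_n\coloneqq\frac{\log X_{(n)}-\log X_{(1)}}{\log\rho}+1 .\] Then for $\mu>1$ and $0<q<1$, \begin{align*} F_{M_n}(\mu)&=(n-1)\,B\!\left(\frac{\rho^{\mu-1}+n-1}{\rho^{\mu-1}-1},\,n-1\right),\\ f_{M_n}(\mu)&=\frac{n\rho^{\mu-1}F_{M_n}(\mu)\log\rho}{(\rho^{\mu-1}-1)^2}\left\{\psi\!\left(\frac{n\rho^{\mu-1}}{\rho^{\mu-1}-1}\right)-\psi\!\left(\frac{\rho^{\mu-1}+n-1}{\rho^{\mu-1}-1}\right)\right\},\\ F_{M_n}^{-1}(q)&\sim\log_\rho\!\left(\frac{n\log(n-1)+\log(1/q)}{\log(1/q)}\right)+1\sim\log_\rho n-\log_\rho(-\log q), \end{align*} where the asymptotic results in the last line hold as either or both $n\to\infty$ and $q\to1^-$, and the first asymptotic equivalence in the last line also holds as $q\to0^+$ with $n$ fixed.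
   Context: $F_{M_n}$, $f_{M_n}$, $F_{M_n}^{-1}$ denote the CDF, density and quantile function of $M_n$. $B(x,y)=\int_0^1 t^{x-1}(1-t)^{y-1}dt$ is the Beta function and $\psi=(\log\Gamma)'$ is the digamma function. $a\sim b$ means the ratio tends to $1$ in the stated limit. *)

theory Defs
  imports "HOL-Probability.Probability" "HOL-Library.Landau_Symbols"
begin

definition Mstat :: "real \<Rightarrow> nat \<Rightarrow> (nat \<Rightarrow> 'a \<Rightarrow> real) \<Rightarrow> 'a \<Rightarrow> real" where
  "Mstat \<rho> n Y \<omega> =
     (ln (Max ((\<lambda>i. Y i \<omega>) ` {..<n})) - ln (Min ((\<lambda>i. Y i \<omega>) ` {..<n}))) / ln \<rho> + 1"

definition quantile :: "(real \<Rightarrow> real) \<Rightarrow> real \<Rightarrow> real" where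
  "quantile F q = Inf {x. q \<le> F x}"

end

theory Submission
  imports Defs "HOL-Real_Asymp.Real_Asymp"
begin

text \<open>
  Put \<open>t = \<rho> powr (\<mu> - 1)\<close>. Then \<open>M\<^sub>n \<le> \<mu>\<close> says that all \<open>X\<^sub>i\<close> lie in \<open>[y, t y]\<close>,
  where \<open>y\<close> is their minimum. Conditioning on the index and the value of the minimum gives
  \<open>F(\<mu>) = n \<cdot> \<integral> l exp(-l y) (exp(-l y) - exp(-l t y))^(n-1) dy = (n-1)! / pochhammer (1 + a) (n-1)\<close>,
  the integral taken over \<open>y \<ge> 0\<close> and \<open>a = n / (t - 1)\<close>. This is \<open>(n - 1) B(1 + a, n - 1)\<close>,
  and the density is the chain rule applied to the Beta function. As a product,
  \<open>(n-1)! / pochhammer (1 + a) (n-1) = \<Prod>k < n-1. (k + 1) / (a + k + 1)\<close>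
  lies between \<open>exp (- a H(n-1))\<close> and \<open>1 / (1 + a)\<close>. Inverting these two bounds traps the
  quantile between explicit logarithmic expressions, and every asymptotic statement follows by
  sandwiching.
\<close>

section \<open>A Beta-type distribution function\<close>

text \<open>The distribution function of \<open>M\<^sub>n\<close> at \<open>\<mu>\<close> is \<open>spread_cdf n (n / (\<rho> powr (\<mu> - 1) - 1))\<close>.\<close>

definition spread_cdf :: "nat \<Rightarrow> real \<Rightarrow> real" where
  "spread_cdf n a = fact (n - 1) / pochhammer (1 + a) (n - 1)"

lemma spread_cdf_eq_Beta:
  assumes "a > 0" and "n \<ge> 2"
  shows "spread_cdf n a = (real n - 1) * Beta (1 + a) (real n - 1)"
proof -
  define m where "m = n - 1"
  have m: "m \<ge> 1" "real n - 1 = real m" using assms(2) by (auto simp: m_def)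
  have "1 + a \<notin> \<int>\<^sub>\<le>\<^sub>0" "real m \<notin> \<int>\<^sub>\<le>\<^sub>0"
    using assms(1) m(1) by (auto elim!: nonpos_Ints_cases)
  then have Gamma: "Gamma (1 + a) * rGamma (1 + a) = 1" "real m * Gamma (real m) = fact m"
    using Gamma_plus1[of "real m"] Gamma_fact[of m, where 'a = real]
    by (simp_all add: rGamma_inverse_Gamma Gamma_eq_zero_iff add_ac)
  have "pochhammer (1 + a) m > 0" using assms(1) by (intro pochhammer_pos) auto
  have "(real n - 1) * Beta (1 + a) (real n - 1)
      = (real m * Gamma (real m)) * (Gamma (1 + a) * rGamma (1 + a + real m))"
    by (simp add: Beta_altdef m(2) algebra_simps)
  also have "\<dots> = fact m / pochhammer (1 + a) m"
    using Gamma \<open>pochhammer (1 + a) m > 0\<close> pochhammer_rGamma[of "1 + a" m]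
    by (simp add: field_simps)
  finally show ?thesis by (simp add: spread_cdf_def m_def)
qed

lemma spread_cdf_eq_prod: "spread_cdf n a = (\<Prod>k<n - 1. (real k + 1) / (a + real k + 1))"
  by (simp add: spread_cdf_def pochhammer_fact pochhammer_prod atLeast0LessThan prod_dividef
      algebra_simps)

lemma spread_cdf_le:
  assumes "n \<ge> 2" and "a \<ge> 0"
  shows "spread_cdf n a \<le> 1 / (1 + a)"
proof -
  have "{..<n - 1} = insert 0 {1..<n - 1}" using assms(1) by auto
  then have "spread_cdf n a = 1 / (1 + a) * (\<Prod>k\<in>{1..<n - 1}. (real k + 1) / (a + real k + 1))"
    by (simp add: spread_cdf_eq_prod add.commute)
  also have "\<dots> \<le> 1 / (1 + a)"
    using assms(2) by (intro mult_right_le_one_le prod_le_1 prod_nonneg) auto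
  finally show ?thesis .
qed

lemma exp_harm_le_spread_cdf:
  assumes "a \<ge> 0"
  shows "exp (- a * harm (n - 1)) \<le> spread_cdf n a"
proof -
  have "exp (- a * harm (n - 1)) = (\<Prod>k<n - 1. inverse (exp (a / (real k + 1))))"
    by (simp add: harm_altdef exp_sum sum_distrib_left divide_inverse add.commute
        flip: exp_minus sum_negf)
  also have "\<dots> \<le> (\<Prod>k<n - 1. inverse ((a + real k + 1) / (real k + 1)))"
  proof (intro prod_mono conjI le_imp_inverse_le)
    fix k assume "k \<in> {..<n - 1}"
    show "(a + real k + 1) / (real k + 1) \<le> exp (a / (real k + 1))"
      using exp_ge_add_one_self[of "a / (real k + 1)"] by (simp add: field_simps)
  qed (use assms in auto)
  finally show ?thesis by (simp add: spread_cdf_eq_prod)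
qed

lemma spread_cdf_eq_pochhammer:
  assumes "n \<ge> 1" and "c > 0"
  shows "real n * (fact (n - 1) / (c * pochhammer (real n / c) n)) = spread_cdf n (real n / c)"
proof -
  define a where "a = real n / c"
  have "a > 0" using assms by (simp add: a_def)
  have "pochhammer a n = a * pochhammer (a + 1) (n - 1)"
    using pochhammer_rec[of a "n - 1"] assms(1) by simp
  moreover have "pochhammer (a + 1) (n - 1) > 0" using \<open>a > 0\<close> by (intro pochhammer_pos) simp
  moreover have "real n = a * c" using assms(2) by (simp add: a_def)
  ultimately show ?thesis
    using \<open>a > 0\<close> assms(2) by (simp add: spread_cdf_def add.commute flip: a_def)
qed

lemma spread_cdf_eq_Beta_powr:
  assumes "\<rho> > 1" and "\<mu> > 1" and "n \<ge> 2"
  shows "spread_cdf n (real n / (\<rho> powr (\<mu> - 1) - 1))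
    = (real n - 1) * Beta ((\<rho> powr (\<mu> - 1) + real n - 1) / (\<rho> powr (\<mu> - 1) - 1)) (real n - 1)"
proof -
  have "\<rho> powr (\<mu> - 1) > 1" using assms by simp
  then have "(\<rho> powr (\<mu> - 1) + real n - 1) / (\<rho> powr (\<mu> - 1) - 1) = 1 + real n / (\<rho> powr (\<mu> - 1) - 1)"
    by (simp add: field_simps)
  with \<open>\<rho> powr (\<mu> - 1) > 1\<close> show ?thesis using assms(3) by (simp add: spread_cdf_eq_Beta)
qed

section \<open>Integrals against the exponential distribution\<close>

lemma has_bochner_integral_exponential_density:
  assumes "l > 0"
  shows "has_bochner_integral lborel (exponential_density l) 1"
proof (rule has_bochner_integral_nn_integral)
  have "emeasure (density lborel (exponential_density l)) UNIV = 1"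
    using prob_space.emeasure_space_1[OF prob_space_exponential_density[OF assms]] by simp
  then show "(\<integral>\<^sup>+ x. ennreal (exponential_density l x) \<partial>lborel) = ennreal 1"
    by (subst (asm) emeasure_density) auto
qed (use assms in \<open>simp_all add: exponential_density_nonneg\<close>)

lemma has_bochner_integral_exp_one_minus_exp_power:
  fixes l c s :: real and m :: nat
  assumes l: "l > 0" and c: "c > 0" and s: "s > 0"
  shows "has_bochner_integral lborel
     (\<lambda>x. indicator {0..} x * (l * exp (- l * s * x) * (1 - exp (- l * c * x)) ^ m))
     (fact m / (c * pochhammer (s / c) (Suc m)))"
  using s
proof (induction m arbitrary: s)
  case 0
  have "has_bochner_integral lborel (\<lambda>x. exponential_density (l * s) x / s) (1 / s)"
    using l 0 by (intro has_bochner_integral_divide_zero has_bochner_integral_exponential_density) simp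
  moreover have "(\<lambda>x. exponential_density (l * s) x / s) =
     (\<lambda>x. indicator {0..} x * (l * exp (- l * s * x) * (1 - exp (- l * c * x)) ^ 0))"
    using 0 by (auto simp: exponential_density_def fun_eq_iff indicator_def algebra_simps)
  ultimately show ?case using c by simp
next
  case (Suc m)
  define y where "y = s / c"
  have y: "y > 0" "(s + c) / c = y + 1" using Suc.prems c by (simp_all add: y_def field_simps)
  \<comment> \<open>Splitting off one factor \<open>1 - exp (- l c x)\<close> reduces \<open>m + 1\<close> to \<open>m\<close> at \<open>s\<close> and at \<open>s + c\<close>.\<close>
  have "has_bochner_integral lborel
     (\<lambda>x. indicator {0..} x * (l * exp (- l * s * x) * (1 - exp (- l * c * x)) ^ m)
        - indicator {0..} x * (l * exp (- l * (s + c) * x) * (1 - exp (- l * c * x)) ^ m))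
     (fact m / (c * pochhammer y (Suc m)) - fact m / (c * pochhammer (y + 1) (Suc m)))"
    using Suc.IH[of s] Suc.IH[of "s + c"] Suc.prems c by (simp add: y y_def has_bochner_integral_diff)
  moreover have "exp (- l * (s + c) * x) = exp (- l * s * x) * exp (- l * c * x)" for x
    by (simp add: algebra_simps flip: exp_add)
  moreover have "fact m / (c * pochhammer y (Suc m)) - fact m / (c * pochhammer (y + 1) (Suc m))
      = fact (Suc m) / (c * pochhammer y (Suc (Suc m)))"
  proof -
    define P where "P = pochhammer (y + 1) m"
    define z where "z = y + 1 + real m"
    have "P > 0" "z > 0" "real (Suc m) = z - y" using y by (simp_all add: P_def z_def pochhammer_pos)
    moreover have "pochhammer y (Suc m) = y * P" "pochhammer (y + 1) (Suc m) = P * z"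
      "pochhammer y (Suc (Suc m)) = y * (P * z)"
      unfolding P_def z_def
      by (rule pochhammer_rec, rule pochhammer_Suc,
          simp only: pochhammer_rec[of y "Suc m"] pochhammer_Suc[of "y + 1" m])
    ultimately show ?thesis
      using y c by (simp add: field_simps del: of_nat_Suc) (simp add: z_def algebra_simps)
  qed
  ultimately show ?case by (simp add: algebra_simps y_def)
qed

lemma nn_integral_exponential_diff_power:
  fixes l t :: real and m :: nat
  assumes l: "l > 0" and t: "t > 1"
  shows "(\<integral>\<^sup>+ y. ennreal (indicator {0..} y * (exp (- l * y) - exp (- l * (t * y))) ^ m)
      \<partial>density lborel (exponential_density l))
    = ennreal (fact m / ((t - 1) * pochhammer (real (Suc m) / (t - 1)) (Suc m)))"
proof -
  have "(\<integral>\<^sup>+ y. ennreal (indicator {0..} y * (exp (- l * y) - exp (- l * (t * y))) ^ m)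
      \<partial>density lborel (exponential_density l))
    = (\<integral>\<^sup>+ y. ennreal (indicator {0..} y *
      (l * exp (- l * real (Suc m) * y) * (1 - exp (- l * (t - 1) * y)) ^ m)) \<partial>lborel)"
  proof (subst nn_integral_density, (simp_all)[2], intro nn_integral_cong)
    fix y :: real
    have "exp (- l * y) - exp (- l * (t * y)) = exp (- l * y) * (1 - exp (- l * (t - 1) * y))"
      by (simp add: algebra_simps flip: exp_add)
    moreover have "exp (- y * l) * exp (- l * y) ^ m = exp (- l * real (Suc m) * y)"
      by (simp add: algebra_simps flip: exp_add exp_of_nat_mult)
    ultimately have eq: "exponential_density l y * (indicator {0..} y * (exp (- l * y) - exp (- l * (t * y))) ^ m)
      = indicator {0..} y * (l * exp (- l * real (Suc m) * y) * (1 - exp (- l * (t - 1) * y)) ^ m)"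
      by (auto simp: exponential_density_def indicator_def power_mult_distrib)
    have "exp (- l * (t * y)) \<le> exp (- l * y)" if "0 \<le> y"
      using that t l by (simp add: mult_le_cancel_right1)
    then have "0 \<le> indicator {0..} y * (exp (- l * y) - exp (- l * (t * y))) ^ m"
      by (simp add: indicator_def)
    from ennreal_mult[OF exponential_density_nonneg[OF l] this, symmetric] eq show "ennreal (exponential_density l y)
        * ennreal (indicator {0..} y * (exp (- l * y) - exp (- l * (t * y))) ^ m)
      = ennreal (indicator {0..} y * (l * exp (- l * real (Suc m) * y) * (1 - exp (- l * (t - 1) * y)) ^ m))"
      by (simp only:)
  qed
  also have "\<dots> = ennreal (fact m / ((t - 1) * pochhammer (real (Suc m) / (t - 1)) (Suc m)))"
    using has_bochner_integral_exp_one_minus_exp_power[of l "t - 1" "real (Suc m)" m] l t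
    by (subst nn_integral_eq_integral) (auto simp: has_bochner_integral_iff indicator_def)
  finally show ?thesis .
qed

lemma emeasure_density_lborel_singleton:
  assumes "f \<in> borel_measurable borel"
  shows "emeasure (density lborel f) {y} = 0"
proof -
  have "emeasure (density lborel f) {y} = (\<integral>\<^sup>+ x. f x * indicator {y} x \<partial>lborel)"
    using assms by (intro emeasure_density) auto
  also have "\<dots> = 0"
    by (rule nn_integral_zero') (use AE_lborel_singleton[of y] in \<open>auto elim!: eventually_mono\<close>)
  finally show ?thesis .
qed

lemma emeasure_exponential_greaterThanAtMost:
  assumes "l > 0" and "0 \<le> y" "y \<le> z"
  shows "emeasure (density lborel (exponential_density l)) {y<..z} = ennreal (exp (- l * y) - exp (- l * z))"
proof -
  let ?D = "density lborel (exponential_density l)"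
  have atMost: "emeasure ?D {..a} = ennreal (1 - exp (- l * a))" if "0 \<le> a" for a
    using emeasure_erlang_density[OF assms(1), of 0 a] that by (simp add: erlang_CDF_0)
  have "{y<..z} = {..z} - {..y}" by auto
  then have "emeasure ?D {y<..z} = emeasure ?D {..z} - emeasure ?D {..y}"
    using assms by (simp add: emeasure_Diff atMost)
  also have "\<dots> = ennreal ((1 - exp (- l * z)) - (1 - exp (- l * y)))"
    using assms by (simp add: atMost ennreal_minus mult_nonneg_nonneg)
  finally show ?thesis by simp
qed

lemma emeasure_exponential_atLeastAtMost:
  assumes "l > 0" and "0 \<le> y" "y \<le> z"
  shows "emeasure (density lborel (exponential_density l)) {y..z} = ennreal (exp (- l * y) - exp (- l * z))"
proof -
  let ?D = "density lborel (exponential_density l)"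
  have "emeasure ?D {y..z} = emeasure ?D ({y} \<union> {y<..z})"
    using assms by (intro arg_cong[where f = "emeasure ?D"]) auto
  also have "\<dots> = emeasure ?D {y} + emeasure ?D {y<..z}"
    by (intro plus_emeasure[symmetric]) auto
  finally show ?thesis
    using emeasure_exponential_greaterThanAtMost[OF assms] emeasure_density_lborel_singleton[of _ y]
    by simp
qed

lemma (in prob_space) AE_exponential_distributed_pos:
  assumes "distributed M lborel X (exponential_density l)"
  shows "AE \<omega> in M. 0 < X \<omega>"
proof -
  have "AE x in lborel. 0 < exponential_density l x \<longrightarrow> 0 < x"
    using AE_lborel_singleton[of 0]
    by eventually_elim (auto simp: exponential_density_def)
  then show ?thesis using distributed_AE2[OF assms, of "\<lambda>x. 0 < x"] by simp
qed

section \<open>The event that the sample maximum is at most \<open>t\<close> times the minimum\<close>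

definition spread_event :: "nat set \<Rightarrow> real \<Rightarrow> (nat \<Rightarrow> real) set" where
  "spread_event I t = {x \<in> space (PiM I (\<lambda>_. borel)). \<forall>i\<in>I. 0 \<le> x i \<and> (\<forall>j\<in>I. x j \<le> t * x i)}"

text \<open>The part of \<^term>\<open>spread_event I t\<close> on which \<open>i\<close> is the first index attaining the minimum.\<close>

definition spread_event_argmin :: "nat set \<Rightarrow> real \<Rightarrow> nat \<Rightarrow> (nat \<Rightarrow> real) set" where
  "spread_event_argmin I t i = {x \<in> space (PiM I (\<lambda>_. borel)). 0 \<le> x i
     \<and> (\<forall>j\<in>I. j < i \<longrightarrow> x i < x j \<and> x j \<le> t * x i)
     \<and> (\<forall>j\<in>I. i < j \<longrightarrow> x i \<le> x j \<and> x j \<le> t * x i)}"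

lemma spread_event_sets [measurable]:
  "finite I \<Longrightarrow> spread_event I t \<in> sets (PiM I (\<lambda>_. borel))"
  unfolding spread_event_def not_less[symmetric] by measurable

lemma spread_event_argmin_sets [measurable]:
  "finite I \<Longrightarrow> i \<in> I \<Longrightarrow> spread_event_argmin I t i \<in> sets (PiM I (\<lambda>_. borel))"
  unfolding spread_event_argmin_def not_less[symmetric] by measurable

lemma spread_event_eq_UN_argmin:
  assumes "finite I" "I \<noteq> {}" and "t \<ge> 1"
  shows "spread_event I t = (\<Union>i\<in>I. spread_event_argmin I t i)"
proof (intro equalityI subsetI)
  fix x assume x: "x \<in> spread_event I t"
  let ?P = "\<lambda>i. i \<in> I \<and> (\<forall>j\<in>I. x i \<le> x j)"
  have "Min (x ` I) \<in> x ` I" using assms(1,2) by (intro Min_in) auto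
  then obtain i0 where "i0 \<in> I" "x i0 = Min (x ` I)" by auto
  then have "?P i0" using assms(1) by simp
  define i where "i = (LEAST i. ?P i)"
  have i: "?P i" unfolding i_def by (rule LeastI) fact
  have "x i < x j" if "j \<in> I" "j < i" for j
  proof -
    have "\<not> ?P j" using that(2) unfolding i_def by (rule not_less_Least)
    then show ?thesis using that(1) i by force
  qed
  then have "x \<in> spread_event_argmin I t i"
    using x i unfolding spread_event_def spread_event_argmin_def by auto
  then show "x \<in> (\<Union>i\<in>I. spread_event_argmin I t i)" using i by blast
next
  fix x assume "x \<in> (\<Union>i\<in>I. spread_event_argmin I t i)"
  then obtain i where "i \<in> I" and x: "x \<in> spread_event_argmin I t i" by auto
  have "0 \<le> x i" using x by (simp add: spread_event_argmin_def)
  have bounds: "x i \<le> x j \<and> x j \<le> t * x i" if "j \<in> I" for j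
  proof (cases j i rule: linorder_cases)
    case equal
    have "1 * x i \<le> t * x i" using assms(3) \<open>0 \<le> x i\<close> by (intro mult_right_mono) auto
    then show ?thesis using equal by simp
  qed (use x that in \<open>auto simp: spread_event_argmin_def\<close>)
  have "x j \<le> t * x a" if "a \<in> I" "j \<in> I" for a j
  proof -
    have "t * x i \<le> t * x a" using bounds[OF that(1)] assms(3) by (intro mult_left_mono) auto
    then show ?thesis using bounds[OF that(2)] by linarith
  qed
  then show "x \<in> spread_event I t"
    using x bounds \<open>0 \<le> x i\<close> unfolding spread_event_def spread_event_argmin_def by force
qed

lemma disjoint_family_on_spread_event_argmin: "disjoint_family_on (spread_event_argmin I t) I"
proof -
  have *: "x \<notin> spread_event_argmin I t k"
    if "x \<in> spread_event_argmin I t i" "i < k" "i \<in> I" "k \<in> I" for x i k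
    using that unfolding spread_event_argmin_def by force
  show ?thesis unfolding disjoint_family_on_def
    using * by (auto simp: neq_iff)
qed

lemma fun_upd_in_spread_event_argmin_iff:
  assumes "i \<notin> J" and "x \<in> space (PiM J (\<lambda>_. borel))"
  shows "x(i := y) \<in> spread_event_argmin (insert i J) t i \<longleftrightarrow>
    0 \<le> y \<and> x \<in> PiE J (\<lambda>j. if j < i then {y<..t * y} else {y..t * y})"
proof -
  have "x(i := y) \<in> space (PiM (insert i J) (\<lambda>_. borel))"
    using assms(2) by (auto simp: space_PiM PiE_def extensional_def)
  moreover have "x \<in> extensional J" using assms(2) by (simp add: space_PiM PiE_def)
  moreover have "j \<noteq> i" if "j \<in> J" for j using assms(1) that by auto
  ultimately show ?thesis
    unfolding spread_event_argmin_def PiE_iff by (auto simp: neq_iff)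
qed

lemma nn_integral_spread_event_argmin_slice:
  fixes l t y :: real
  assumes "l > 0" and "t > 1" and "finite J" "i \<notin> J"
  shows "(\<integral>\<^sup>+ x. indicator (spread_event_argmin (insert i J) t i) (x(i := y))
      \<partial>PiM J (\<lambda>_. density lborel (exponential_density l)))
    = ennreal (indicator {0..} y * (exp (- l * y) - exp (- l * (t * y))) ^ card J)"
proof -
  let ?D = "density lborel (exponential_density l)"
  define R where "R = (\<lambda>j. if j < i then {y<..t * y} else {y..t * y})"
  interpret product_sigma_finite "\<lambda>_. ?D"
    unfolding product_sigma_finite_def
    using prob_space_imp_sigma_finite[OF prob_space_exponential_density[OF assms(1)]] by simp
  have R: "R j \<in> sets ?D" for j by (simp add: R_def)
  have "indicator (spread_event_argmin (insert i J) t i) (x(i := y))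
      = (indicator {0..} y * indicator (PiE J R) x :: ennreal)"
    if "x \<in> space (PiM J (\<lambda>_. ?D))" for x
  proof -
    have "x \<in> space (PiM J (\<lambda>_. borel))" using that by (simp add: space_PiM)
    from fun_upd_in_spread_event_argmin_iff[OF assms(4) this, of y t] show ?thesis
      by (simp add: R_def indicator_def)
  qed
  then have "(\<integral>\<^sup>+ x. indicator (spread_event_argmin (insert i J) t i) (x(i := y)) \<partial>PiM J (\<lambda>_. ?D))
      = (\<integral>\<^sup>+ x. indicator {0..} y * indicator (PiE J R) x \<partial>PiM J (\<lambda>_. ?D))"
    by (intro nn_integral_cong) simp
  also have "\<dots> = indicator {0..} y * emeasure (PiM J (\<lambda>_. ?D)) (PiE J R)"
    using R assms(3) by (intro nn_integral_cmult_indicator sets_PiM_I_finite) auto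
  also have "emeasure (PiM J (\<lambda>_. ?D)) (PiE J R) = (\<Prod>j\<in>J. emeasure ?D (R j))"
    using R assms(3) by (intro emeasure_PiM) auto
  finally have slice: "(\<integral>\<^sup>+ x. indicator (spread_event_argmin (insert i J) t i) (x(i := y))
      \<partial>PiM J (\<lambda>_. ?D)) = indicator {0..} y * (\<Prod>j\<in>J. emeasure ?D (R j))" .
  show ?thesis
  proof (cases "0 \<le> y")
    case True
    have "y \<le> t * y" using True assms(2) by (simp add: mult_le_cancel_right1)
    moreover have "exp (- l * (t * y)) \<le> exp (- l * y)"
      using \<open>y \<le> t * y\<close> assms(1) by simp
    ultimately have "emeasure ?D (R j) = ennreal (exp (- l * y) - exp (- l * (t * y)))" for j
      unfolding R_def using True assms(1)
      by (simp add: emeasure_exponential_greaterThanAtMost emeasure_exponential_atLeastAtMost)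
    then show ?thesis
      using slice True \<open>exp (- l * (t * y)) \<le> exp (- l * y)\<close> by (simp add: ennreal_power)
  qed (simp add: slice)
qed

lemma emeasure_PiM_spread_event_argmin:
  fixes l t :: real
  assumes l: "l > 0" and t: "t > 1" and I: "finite I" "i \<in> I"
  shows "emeasure (PiM I (\<lambda>_. density lborel (exponential_density l))) (spread_event_argmin I t i)
    = ennreal (fact (card I - 1) / ((t - 1) * pochhammer (real (card I) / (t - 1)) (card I)))"
proof -
  let ?D = "density lborel (exponential_density l)"
  let ?E = "spread_event_argmin I t i"
  define J where "J = I - {i}"
  define m where "m = card I - 1"
  have "card I > 0" using I by (auto simp: card_gt_0_iff)
  then have J: "I = insert i J" "finite J" "i \<notin> J" "card J = m" "card I = Suc m"
    using I by (simp_all add: J_def m_def insert_absorb card_Diff_singleton)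
  interpret product_sigma_finite "\<lambda>_. ?D"
    unfolding product_sigma_finite_def
    using prob_space_imp_sigma_finite[OF prob_space_exponential_density[OF l]] by simp
  have "sets (PiM I (\<lambda>_. ?D)) = sets (PiM I (\<lambda>_. borel))" by (intro sets_PiM_cong) simp_all
  then have E: "?E \<in> sets (PiM (insert i J) (\<lambda>_. ?D))" using I by (simp add: J(1)[symmetric])
  have "emeasure (PiM I (\<lambda>_. ?D)) ?E = (\<integral>\<^sup>+ x. indicator ?E x \<partial>PiM (insert i J) (\<lambda>_. ?D))"
    using E by (simp add: J(1)[symmetric])
  also have "\<dots> = (\<integral>\<^sup>+ y. (\<integral>\<^sup>+ x. indicator ?E (x(i := y)) \<partial>PiM J (\<lambda>_. ?D)) \<partial>?D)"
    by (rule product_nn_integral_insert_rev[OF J(2,3) borel_measurable_indicator[OF E]])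
  also have "\<dots> = (\<integral>\<^sup>+ y. ennreal (indicator {0..} y * (exp (- l * y) - exp (- l * (t * y))) ^ m) \<partial>?D)"
    using nn_integral_spread_event_argmin_slice[OF l t J(2,3)] by (simp add: J(1,4))
  also have "\<dots> = ennreal (fact m / ((t - 1) * pochhammer (real (Suc m) / (t - 1)) (Suc m)))"
    by (rule nn_integral_exponential_diff_power[OF l t])
  finally show ?thesis by (simp add: J(5))
qed

lemma emeasure_PiM_spread_event:
  fixes l t :: real
  assumes "l > 0" and "t > 1" and "finite I" "I \<noteq> {}"
  shows "emeasure (PiM I (\<lambda>_. density lborel (exponential_density l))) (spread_event I t)
    = ennreal (spread_cdf (card I) (real (card I) / (t - 1)))"
proof -
  let ?P = "PiM I (\<lambda>_. density lborel (exponential_density l))"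
  have "sets ?P = sets (PiM I (\<lambda>_. borel))" by (intro sets_PiM_cong) simp_all
  then have "emeasure ?P (spread_event I t) = (\<Sum>i\<in>I. emeasure ?P (spread_event_argmin I t i))"
    using spread_event_argmin_sets[OF assms(3)] assms(3)
    unfolding spread_event_eq_UN_argmin[OF assms(3,4) less_imp_le[OF assms(2)]]
    by (intro sum_emeasure[symmetric] disjoint_family_on_spread_event_argmin) blast+
  also have "\<dots> = of_nat (card I) *
      ennreal (fact (card I - 1) / ((t - 1) * pochhammer (real (card I) / (t - 1)) (card I)))"
    using assms by (simp add: emeasure_PiM_spread_event_argmin)
  also have "\<dots> = ennreal (spread_cdf (card I) (real (card I) / (t - 1)))"
  proof -
    have "card I \<ge> 1" using assms(3,4) by (simp add: Suc_le_eq card_gt_0_iff)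
    moreover have "0 \<le> fact (card I - 1) / ((t - 1) * pochhammer (real (card I) / (t - 1)) (card I))"
      using assms(2) \<open>card I \<ge> 1\<close> by (intro divide_nonneg_pos mult_pos_pos pochhammer_pos) auto
    ultimately show ?thesis
      using spread_cdf_eq_pochhammer[of "card I" "t - 1"] assms(2)
      by (simp add: ennreal_of_nat_eq_real_of_nat flip: ennreal_mult)
  qed
  finally show ?thesis .
qed

section \<open>The distribution function of \<open>M\<^sub>n\<close> and its derivative\<close>

lemma Mstat_measurable [measurable]:
  assumes "\<And>i. i < n \<Longrightarrow> Y i \<in> borel_measurable M"
  shows "Mstat \<rho> n Y \<in> borel_measurable M"
proof -
  have [measurable]: "(\<lambda>\<omega>. Max ((\<lambda>i. Y i \<omega>) ` {..<n})) \<in> borel_measurable M"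
    "(\<lambda>\<omega>. Min ((\<lambda>i. Y i \<omega>) ` {..<n})) \<in> borel_measurable M"
    using assms by (auto intro!: borel_measurable_Max borel_measurable_Min)
  show ?thesis unfolding Mstat_def[abs_def] by measurable
qed

lemma Mstat_le_iff:
  assumes "n \<ge> 1" and "\<rho> > 1" and pos: "\<And>i. i < n \<Longrightarrow> Y i \<omega> > 0"
  shows "Mstat \<rho> n Y \<omega> \<le> \<mu> \<longleftrightarrow> (\<lambda>i\<in>{..<n}. Y i \<omega>) \<in> spread_event {..<n} (\<rho> powr (\<mu> - 1))"
proof -
  define t where "t = \<rho> powr (\<mu> - 1)"
  define a where "a = Max ((\<lambda>i. Y i \<omega>) ` {..<n})"
  define b where "b = Min ((\<lambda>i. Y i \<omega>) ` {..<n})"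
  have ne: "(\<lambda>i. Y i \<omega>) ` {..<n} \<noteq> {}" using assms(1) by (auto simp: lessThan_empty_iff)
  have "a \<in> (\<lambda>i. Y i \<omega>) ` {..<n}" "b \<in> (\<lambda>i. Y i \<omega>) ` {..<n}"
    unfolding a_def b_def using ne by (intro Max_in Min_in; simp)+
  then have "a > 0" "b > 0" using pos by auto
  have "Mstat \<rho> n Y \<omega> = (ln a - ln b) / ln \<rho> + 1" by (simp add: Mstat_def a_def b_def)
  then have "Mstat \<rho> n Y \<omega> \<le> \<mu> \<longleftrightarrow> (ln a - ln b) / ln \<rho> \<le> \<mu> - 1" by linarith
  also have "\<dots> \<longleftrightarrow> ln a - ln b \<le> (\<mu> - 1) * ln \<rho>"
    using assms(2) by (intro pos_divide_le_eq) simp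
  also have "\<dots> \<longleftrightarrow> ln a \<le> ln (b * t)"
    using \<open>b > 0\<close> assms(2) by (simp add: t_def ln_mult ln_powr algebra_simps)
  also have "\<dots> \<longleftrightarrow> a \<le> b * t"
    using \<open>a > 0\<close> \<open>b > 0\<close> assms(2) by (intro ln_le_cancel_iff) (simp_all add: t_def)
  also have "\<dots> \<longleftrightarrow> (\<forall>i<n. \<forall>j<n. Y j \<omega> \<le> t * Y i \<omega>)"
  proof
    assume "a \<le> b * t"
    show "\<forall>i<n. \<forall>j<n. Y j \<omega> \<le> t * Y i \<omega>"
    proof (intro allI impI)
      fix i j assume "i < n" "j < n"
      then have "Y j \<omega> \<le> a" "b \<le> Y i \<omega>" unfolding a_def b_def by auto
      moreover have "b * t \<le> Y i \<omega> * t"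
        using \<open>b \<le> Y i \<omega>\<close> assms(2) by (intro mult_right_mono) (simp_all add: t_def)
      ultimately show "Y j \<omega> \<le> t * Y i \<omega>" using \<open>a \<le> b * t\<close> by (simp add: mult.commute)
    qed
  next
    assume "\<forall>i<n. \<forall>j<n. Y j \<omega> \<le> t * Y i \<omega>"
    moreover obtain i where "i < n" "b = Y i \<omega>" using \<open>b \<in> _\<close> by auto
    ultimately show "a \<le> b * t" unfolding a_def using ne by (auto simp: Max_le_iff mult.commute)
  qed
  finally show ?thesis
    using pos unfolding spread_event_def t_def by (auto simp: space_PiM less_imp_le)
qed

lemma (in prob_space) distr_restrict_eq_PiM_density:
  assumes "indep_vars (\<lambda>_. borel) Y I" and "I \<noteq> {}"
    and Y: "\<And>i. i \<in> I \<Longrightarrow> distributed M lborel (Y i) f"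
  shows "distr M (PiM I (\<lambda>_. borel)) (\<lambda>\<omega>. \<lambda>i\<in>I. Y i \<omega>) = PiM I (\<lambda>_. density lborel f)"
proof -
  have rv: "random_variable borel (Y i)" if "i \<in> I" for i
    using distributed_measurable[OF Y[OF that]] by simp
  from indep_vars_iff_distr_eq_PiM'[OF assms(2) rv] assms(1)
  have "distr M (PiM I (\<lambda>_. borel)) (\<lambda>\<omega>. \<lambda>i\<in>I. Y i \<omega>) = PiM I (\<lambda>i. distr M borel (Y i))"
    by simp
  also have "\<dots> = PiM I (\<lambda>i. distr M lborel (Y i))"
    by (intro PiM_cong refl distr_cong) simp_all
  also have "\<dots> = PiM I (\<lambda>_. density lborel f)"
    using Y by (intro PiM_cong refl distributed_distr_eq_density) simp
  finally show ?thesis .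
qed

lemma cdf_Mstat_exponential:
  fixes M :: "'a measure" and Y :: "nat \<Rightarrow> 'a \<Rightarrow> real"
  assumes "prob_space M" and indep: "prob_space.indep_vars M (\<lambda>_. borel) Y {..<n}"
    and Y: "\<And>i. i < n \<Longrightarrow> distributed M lborel (Y i) (exponential_density l)"
    and "l > 0" and "\<rho> > 1" and "n \<ge> 1" and "\<mu> > 1"
  shows "cdf (distr M borel (Mstat \<rho> n Y)) \<mu> = spread_cdf n (real n / (\<rho> powr (\<mu> - 1) - 1))"
proof -
  interpret prob_space M by fact
  define t where "t = \<rho> powr (\<mu> - 1)"
  define V where "V = (\<lambda>\<omega>. \<lambda>i\<in>{..<n}. Y i \<omega>)"
  have "t > 1" using assms by (simp add: t_def)
  have [measurable]: "Y i \<in> borel_measurable M" if "i < n" for i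
    using distributed_measurable[OF Y[OF that]] by simp
  then have V [measurable]: "V \<in> measurable M (PiM {..<n} (\<lambda>_. borel))"
    unfolding V_def by (intro measurable_restrict) auto
  have "AE \<omega> in M. \<forall>i\<in>{..<n}. 0 < Y i \<omega>"
    using Y by (intro AE_finite_allI AE_exponential_distributed_pos) auto
  then have "AE \<omega> in M. Mstat \<rho> n Y \<omega> \<le> \<mu> \<longleftrightarrow> V \<omega> \<in> spread_event {..<n} t"
    by eventually_elim (use assms in \<open>simp add: Mstat_le_iff V_def t_def\<close>)
  then have "cdf (distr M borel (Mstat \<rho> n Y)) \<mu> = measure M (V -` spread_event {..<n} t \<inter> space M)"
    unfolding cdf_def by (subst measure_distr) (auto intro!: measure_eq_AE)
  also have "\<dots> = measure (distr M (PiM {..<n} (\<lambda>_. borel)) V) (spread_event {..<n} t)"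
    by (simp add: measure_distr)
  also have "\<dots> = measure (PiM {..<n} (\<lambda>_. density lborel (exponential_density l))) (spread_event {..<n} t)"
    unfolding V_def using assms(6)
    by (subst distr_restrict_eq_PiM_density[OF indep _ Y]) (auto simp: lessThan_empty_iff)
  also have "\<dots> = spread_cdf n (real n / (t - 1))"
  proof -
    have "{..<n} \<noteq> {}" using assms(6) by (auto simp: lessThan_empty_iff)
    moreover have "0 \<le> spread_cdf n (real n / (t - 1))"
      using \<open>t > 1\<close> unfolding spread_cdf_def by (intro divide_nonneg_pos pochhammer_pos add_pos_nonneg) auto
    ultimately show ?thesis
      using emeasure_PiM_spread_event[OF \<open>l > 0\<close> \<open>t > 1\<close>, of "{..<n}"] by (simp add: measure_def)
  qed
  finally show ?thesis by (simp add: t_def)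
qed

lemma has_real_derivative_Beta_cdf:
  fixes F :: "real \<Rightarrow> real" and \<rho> \<mu> :: real and n :: nat
  assumes F: "\<And>x. x > 1 \<Longrightarrow>
      F x = (real n - 1) * Beta ((\<rho> powr (x - 1) + real n - 1) / (\<rho> powr (x - 1) - 1)) (real n - 1)"
    and rho: "\<rho> > 1" and n: "n \<ge> 2" and mu: "\<mu> > 1"
  shows "(F has_real_derivative
          (real n * \<rho> powr (\<mu> - 1) * F \<mu> * ln \<rho> / (\<rho> powr (\<mu> - 1) - 1)\<^sup>2 *
            (Digamma (real n * \<rho> powr (\<mu> - 1) / (\<rho> powr (\<mu> - 1) - 1))
             - Digamma ((\<rho> powr (\<mu> - 1) + real n - 1) / (\<rho> powr (\<mu> - 1) - 1))))) (at \<mu>)"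
proof -
  define t where "t = \<rho> powr (\<mu> - 1)"
  define g where "g = (\<lambda>x. (\<rho> powr (x - 1) + real n - 1) / (\<rho> powr (x - 1) - 1))"
  have t: "t > 1" using rho mu by (simp add: t_def)
  have g: "g \<mu> = (t + real n - 1) / (t - 1)" "g \<mu> + (real n - 1) = real n * t / (t - 1)"
    using t by (simp_all add: g_def t_def field_simps)
  then have "g \<mu> > 0" "g \<mu> + (real n - 1) > 0"
    using t n by simp_all
  then have "g \<mu> \<notin> \<int>\<^sub>\<le>\<^sub>0" "g \<mu> + (real n - 1) \<notin> \<int>\<^sub>\<le>\<^sub>0"
    by auto
  note Beta' = has_field_derivative_Beta1[OF this, where A = UNIV]
  have g': "(g has_real_derivative - (real n * t * ln \<rho>) / (t - 1)\<^sup>2) (at \<mu>)"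
    unfolding g_def using rho t
    by (auto intro!: derivative_eq_intros simp: t_def field_simps power2_eq_square)
  have F\<mu>: "F \<mu> = (real n - 1) * Beta (g \<mu>) (real n - 1)"
    using F[OF mu] by (simp only: g_def)
  have "((\<lambda>x. (real n - 1) * Beta (g x) (real n - 1)) has_real_derivative
      (real n - 1) * (Beta (g \<mu>) (real n - 1) * (Digamma (g \<mu>) - Digamma (g \<mu> + (real n - 1)))
        * (- (real n * t * ln \<rho>) / (t - 1)\<^sup>2))) (at \<mu>)"
    by (rule DERIV_cmult[OF DERIV_chain2[OF Beta' g']])
  also have "(real n - 1) * (Beta (g \<mu>) (real n - 1) * (Digamma (g \<mu>) - Digamma (g \<mu> + (real n - 1)))
        * (- (real n * t * ln \<rho>) / (t - 1)\<^sup>2))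
      = real n * t * F \<mu> * ln \<rho> / (t - 1)\<^sup>2 * (Digamma (g \<mu> + (real n - 1)) - Digamma (g \<mu>))"
    unfolding F\<mu> by (simp add: divide_simps) (simp add: algebra_simps)
  finally show ?thesis
    unfolding g(2) unfolding g(1) t_def
    by (rule has_field_derivative_transform_within_open[where S = "{1<..}"])
       (use mu F in \<open>auto simp: g_def\<close>)
qed

section \<open>Bounds and asymptotics for the quantile function\<close>

lemma quantile_between:
  fixes F :: "real \<Rightarrow> real"
  assumes "mono F" and "F x0 < q" and "q \<le> F x1"
  shows "x0 \<le> quantile F q \<and> quantile F q \<le> x1"
proof -
  have lower: "x0 \<le> x" if "q \<le> F x" for x
  proof (rule ccontr)
    assume "\<not> x0 \<le> x"
    then have "F x \<le> F x0" using monoD[OF assms(1)] by simp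
    then show False using assms(2) that by simp
  qed
  then have "bdd_below {x. q \<le> F x}" by (auto simp: bdd_below_def)
  then show ?thesis
    using assms(3) lower unfolding quantile_def by (auto intro: cInf_lower cInf_greatest)
qed

lemma harm_le_one_plus_ln:
  assumes "n \<ge> 1"
  shows "harm n \<le> 1 + ln (real n)"
  using euler_mascheroni_sequence_decreasing[of 1 n] assms by (simp add: harm_def)

lemma asymp_equiv_of_dist_le:
  fixes f g e b :: "'a \<Rightarrow> real"
  assumes "eventually (\<lambda>x. \<bar>f x - g x\<bar> \<le> e x \<and> 0 < b x \<and> b x \<le> g x) F"
    and "((\<lambda>x. e x / b x) \<longlongrightarrow> 0) F"
  shows "f \<sim>[F] g"
proof (rule asymp_equivI')
  have "eventually (\<lambda>x. norm (f x / g x - 1) \<le> e x / b x) F"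
    using assms(1)
  proof eventually_elim
    case (elim x)
    then have "g x > 0" by linarith
    then have "norm (f x / g x - 1) = \<bar>f x - g x\<bar> / g x" by (simp add: field_simps)
    also have "\<dots> \<le> e x / g x" using elim \<open>g x > 0\<close> by (simp add: divide_right_mono)
    also have "\<dots> \<le> e x / b x" using elim by (intro divide_left_mono) auto
    finally show ?case .
  qed
  from Lim_null_comparison[OF this assms(2)] show "((\<lambda>x. f x / g x) \<longlongrightarrow> 1) F"
    by (rule LIM_zero_cancel)
qed

lemma log_band_dist_le:
  fixes \<rho> L V :: real and n :: nat
  assumes "\<rho> > 1" and "n \<ge> 1" and "L > 0"
    and "1 + log \<rho> (real n / (4 * L)) \<le> V" "V \<le> 1 + log \<rho> (2 * real n * (1 + ln (real n)) / L)"
  shows "\<bar>V - (log \<rho> (real n) - log \<rho> L)\<bar> \<le> 1 + log \<rho> 4 + log \<rho> (1 + ln (real n))"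
proof -
  have "ln (real n) \<ge> 0" using assms(2) by simp
  then have "1 + ln (real n) > 0" by simp
  then have "log \<rho> (real n / (4 * L)) = log \<rho> (real n) - log \<rho> 4 - log \<rho> L"
    "log \<rho> (2 * real n * (1 + ln (real n)) / L)
       = log \<rho> 2 + log \<rho> (real n) + log \<rho> (1 + ln (real n)) - log \<rho> L"
    using assms(1-3) by (simp_all add: log_divide log_mult)
  moreover have "log \<rho> 2 \<le> log \<rho> 4" "0 \<le> log \<rho> 4" "0 \<le> log \<rho> (1 + ln (real n))"
    using assms(1) \<open>ln (real n) \<ge> 0\<close> by simp_all
  ultimately show ?thesis using assms(4,5) by linarith
qed

text \<open>Inside the band the distance to \<open>log \<rho> n - log \<rho> (- ln q)\<close> is \<open>O(log log n)\<close>, whereas that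
  quantity is at least \<open>log \<rho> n\<close> as soon as \<open>- ln q < 1\<close>.\<close>

lemma asymp_equiv_joint_of_log_band:
  fixes f :: "nat \<times> real \<Rightarrow> real" and \<rho> :: real
  assumes rho: "\<rho> > 1"
    and band: "\<And>n q. n \<ge> 3 \<Longrightarrow> 1 / 2 < q \<Longrightarrow> q < 1 \<Longrightarrow>
      1 + log \<rho> (real n / (4 * - ln q)) \<le> f (n, q) \<and>
      f (n, q) \<le> 1 + log \<rho> (2 * real n * (1 + ln (real n)) / - ln q)"
  shows "f \<sim>[sequentially \<times>\<^sub>F at_left 1] (\<lambda>(n, q). log \<rho> (real n) - log \<rho> (- ln q))"
proof (rule asymp_equiv_of_dist_le)
  let ?e = "\<lambda>x :: nat \<times> real. 1 + log \<rho> 4 + log \<rho> (1 + ln (real (fst x)))"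
  let ?b = "\<lambda>x :: nat \<times> real. log \<rho> (real (fst x))"
  have "(\<lambda>n::nat. (1 + log \<rho> 4 + log \<rho> (1 + ln (real n))) / log \<rho> (real n)) \<longlonglongrightarrow> 0"
    using rho unfolding log_def by real_asymp
  from filterlim_compose[OF this filterlim_fst[of sequentially "at_left (1::real)"]]
  show "((\<lambda>x. ?e x / ?b x) \<longlongrightarrow> 0) (sequentially \<times>\<^sub>F at_left 1)" by simp
  have "eventually (\<lambda>q. q \<in> {1 / 2<..<1}) (at_left (1::real))"
    by (rule eventually_at_left_real) simp
  from eventually_prodI[OF eventually_ge_at_top[of 3] this]
  show "eventually (\<lambda>x. \<bar>f x - (case x of (n, q) \<Rightarrow> log \<rho> (real n) - log \<rho> (- ln q))\<bar> \<le> ?e x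
      \<and> 0 < ?b x \<and> ?b x \<le> (case x of (n, q) \<Rightarrow> log \<rho> (real n) - log \<rho> (- ln q)))
      (sequentially \<times>\<^sub>F at_left 1)"
  proof eventually_elim
    case (elim x)
    obtain n q where x: "x = (n, q)" by (cases x)
    with elim have n: "n \<ge> 3" and q: "1 / 2 < q" "q < 1" by auto
    have "ln (1 / 2) < ln q" using q by (subst ln_less_cancel_iff) auto
    then have "- ln q < 1" using ln_2_less_1 by (simp add: ln_div)
    moreover have "- ln q > 0" using q by simp
    ultimately have "log \<rho> (- ln q) < 0" using rho by simp
    have "\<bar>f (n, q) - (log \<rho> (real n) - log \<rho> (- ln q))\<bar> \<le> ?e (n, q)"
      using log_band_dist_le[OF rho _ \<open>- ln q > 0\<close>] band[OF n q] n by simp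
    moreover have "0 < ?b (n, q)" using rho n by simp
    ultimately show ?case using \<open>log \<rho> (- ln q) < 0\<close> x by simp
  qed
qed

locale spread_cdf_family =
  fixes \<rho> :: real and F :: "nat \<Rightarrow> real \<Rightarrow> real"
  assumes rho: "\<rho> > 1" and mono: "\<And>n. mono (F n)"
    and F_eq: "\<And>n \<mu>. n \<ge> 2 \<Longrightarrow> \<mu> > 1 \<Longrightarrow> F n \<mu> = spread_cdf n (real n / (\<rho> powr (\<mu> - 1) - 1))"
begin

lemma F_log_eq:
  assumes "n \<ge> 2" and "a > 0"
  shows "F n (1 + log \<rho> (1 + real n / a)) = spread_cdf n a"
proof -
  have "1 + real n / a > 1" using assms by simp
  then have "log \<rho> (1 + real n / a) > 0" using rho by simp
  then have "F n (1 + log \<rho> (1 + real n / a))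
      = spread_cdf n (real n / (\<rho> powr log \<rho> (1 + real n / a) - 1))"
    using F_eq[OF assms(1)] by simp
  also have "\<rho> powr log \<rho> (1 + real n / a) = 1 + real n / a"
    using rho \<open>1 + real n / a > 1\<close> by simp
  finally show ?thesis using assms by simp
qed

lemma F_log_less:
  assumes "n \<ge> 2" and "a > 0" and "1 / (1 + a) < q"
  shows "F n (1 + log \<rho> (1 + real n / a)) < q"
  using F_log_eq[OF assms(1,2)] spread_cdf_le[OF assms(1) less_imp_le[OF assms(2)]] assms(3)
  by linarith

lemma le_F_log_harm:
  assumes "n \<ge> 2" and "0 < q" "q < 1"
  shows "q \<le> F n (1 + log \<rho> (1 + real n * harm (n - 1) / - ln q))"
proof -
  define H :: real where "H = harm (n - 1)"
  \<comment> \<open>kept abstract: the simplifier rewrites \<open>0 < harm (n - 1)\<close> to \<open>1 < n\<close>\<close>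
  define a where "a = - ln q / H"
  have "H > 0" using assms by (simp add: H_def)
  have a: "a > 0" "- a * H = ln q" "real n / a = real n * H / - ln q"
    unfolding a_def using \<open>H > 0\<close> assms by (simp_all add: divide_neg_pos)
  have "q = exp (- a * H)" using assms by (simp only: a(2) exp_ln)
  also have "\<dots> \<le> spread_cdf n a" using a unfolding H_def by (intro exp_harm_le_spread_cdf) simp
  also have "\<dots> = F n (1 + log \<rho> (1 + real n * H / - ln q))"
    using F_log_eq[OF assms(1) a(1)] by (simp only: a(3))
  finally show ?thesis by (simp only: H_def)
qed

lemma quantile_le:
  assumes "n \<ge> 2" and "0 < q" "q < 1"
  shows "quantile (F n) q \<le> 1 + log \<rho> (1 + real n * (1 + ln (real n)) / - ln q)"
proof -
  have "1 / (1 + 1 / q) < q" using assms by (simp add: field_simps)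
  then have "F n (1 + log \<rho> (1 + real n / (1 / q))) < q"
    using assms by (intro F_log_less) auto
  then have "quantile (F n) q \<le> 1 + log \<rho> (1 + real n * harm (n - 1) / - ln q)"
    using quantile_between[OF mono _ le_F_log_harm[OF assms]] by blast
  also have "\<dots> \<le> 1 + log \<rho> (1 + real n * (1 + ln (real n)) / - ln q)"
  proof -
    have "harm (n - 1) \<le> 1 + ln (real (n - 1))" using assms by (intro harm_le_one_plus_ln) simp
    also have "\<dots> \<le> 1 + ln (real n)" using assms by simp
    finally have "real n * harm (n - 1) / - ln q \<le> real n * (1 + ln (real n)) / - ln q"
      using assms by (intro divide_right_mono mult_left_mono) auto
    moreover have "0 < 1 + real n * harm (n - 1) / - ln q"
      using assms by (intro add_pos_nonneg divide_nonneg_pos mult_nonneg_nonneg harm_nonneg) auto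
    ultimately show ?thesis using rho by simp
  qed
  finally show ?thesis .
qed

lemma le_quantile:
  assumes "n \<ge> 2" and "0 < q" "q < 1" and "a > 0" "1 / (1 + a) < q"
  shows "1 + log \<rho> (1 + real n / a) \<le> quantile (F n) q"
  using quantile_between[OF mono F_log_less[OF assms(1,4,5)] le_F_log_harm[OF assms(1-3)]]
  by blast

lemma le_quantile_q:
  assumes "n \<ge> 2" and "0 < q" "q < 1"
  shows "1 + log \<rho> (1 + real n * q) \<le> quantile (F n) q"
  using le_quantile[OF assms, of "1 / q"] assms by (simp add: field_simps)

lemma le_quantile_near_1:
  assumes "n \<ge> 2" and "0 < q" "q < 1"
  shows "1 + log \<rho> (1 + real n * q / (2 * (1 - q))) \<le> quantile (F n) q"
  using le_quantile[OF assms, of "2 * (1 - q) / q"] assms by (simp add: field_simps)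

lemma quantile_equiv_sequentially:
  assumes "0 < q" "q < 1"
  shows "(\<lambda>n. quantile (F n) q) \<sim>[sequentially] (\<lambda>n. log \<rho> (real n))"
proof (rule asymp_equiv_sandwich_real)
  define L where "L = - ln q"
  have "L > 0" using assms by (simp add: L_def)
  show "(\<lambda>n. 1 + log \<rho> (1 + real n * q)) \<sim>[sequentially] (\<lambda>n. log \<rho> (real n))"
    using rho assms unfolding log_def by real_asymp
  show "(\<lambda>n. 1 + log \<rho> (1 + real n * (1 + ln (real n)) / L)) \<sim>[sequentially] (\<lambda>n. log \<rho> (real n))"
    using rho \<open>L > 0\<close> unfolding log_def by real_asymp
  show "eventually (\<lambda>n. quantile (F n) q \<in> {1 + log \<rho> (1 + real n * q)..
      1 + log \<rho> (1 + real n * (1 + ln (real n)) / L)}) sequentially"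
    using eventually_ge_at_top[of 2]
    by eventually_elim (use assms le_quantile_q quantile_le in \<open>auto simp: L_def\<close>)
qed

lemma quantile_equiv_at_left_1:
  assumes "n \<ge> 2"
  shows "quantile (F n) \<sim>[at_left 1] (\<lambda>q. - log \<rho> (- ln q))"
proof (rule asymp_equiv_sandwich_real)
  define c where "c = real n"
  define c' where "c' = real n * (1 + ln (real n))"
  have "c > 0" "c' > 0" using assms by (simp_all add: c_def c'_def add_pos_nonneg)
  show "(\<lambda>q. 1 + log \<rho> (1 + c * q / (2 * (1 - q)))) \<sim>[at_left 1] (\<lambda>q. - log \<rho> (- ln q))"
    using rho \<open>c > 0\<close> unfolding log_def by real_asymp
  show "(\<lambda>q. 1 + log \<rho> (1 + c' / - ln q)) \<sim>[at_left 1] (\<lambda>q. - log \<rho> (- ln q))"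
    using rho \<open>c' > 0\<close> unfolding log_def by real_asymp
  have "eventually (\<lambda>q. q \<in> {0<..<1}) (at_left (1::real))"
    by (rule eventually_at_left_real) simp
  then show "eventually (\<lambda>q. quantile (F n) q \<in> {1 + log \<rho> (1 + c * q / (2 * (1 - q)))..
      1 + log \<rho> (1 + c' / - ln q)}) (at_left 1)"
    by eventually_elim (use assms le_quantile_near_1 quantile_le in \<open>auto simp: c_def c'_def\<close>)
qed

lemma quantile_tendsto_at_right_0:
  assumes "n \<ge> 2"
  shows "(quantile (F n) \<longlongrightarrow> 1) (at_right 0)"
proof (rule tendsto_sandwich)
  define c where "c = real n"
  define c' where "c' = real n * (1 + ln (real n))"
  have "c > 0" "c' > 0" using assms by (simp_all add: c_def c'_def add_pos_nonneg)
  show "((\<lambda>q. 1 + log \<rho> (1 + c * q)) \<longlongrightarrow> 1) (at_right 0)"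
    using rho \<open>c > 0\<close> unfolding log_def by real_asymp
  show "((\<lambda>q. 1 + log \<rho> (1 + c' / - ln q)) \<longlongrightarrow> 1) (at_right 0)"
    using rho \<open>c' > 0\<close> unfolding log_def by real_asymp
  have "eventually (\<lambda>q. q \<in> {0<..<1}) (at_right (0::real))"
    by (rule eventually_at_right_real) simp
  then have "eventually (\<lambda>q. 1 + log \<rho> (1 + c * q) \<le> quantile (F n) q
      \<and> quantile (F n) q \<le> 1 + log \<rho> (1 + c' / - ln q)) (at_right 0)"
    by eventually_elim (use assms le_quantile_q quantile_le in \<open>auto simp: c_def c'_def\<close>)
  then show "eventually (\<lambda>q. 1 + log \<rho> (1 + c * q) \<le> quantile (F n) q) (at_right 0)"
    "eventually (\<lambda>q. quantile (F n) q \<le> 1 + log \<rho> (1 + c' / - ln q)) (at_right 0)"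
    by (auto elim: eventually_mono)
qed

lemma quantile_log_band:
  assumes "n \<ge> 3" and "1 / 2 < q" "q < 1"
  shows "1 + log \<rho> (real n / (4 * - ln q)) \<le> quantile (F n) q
    \<and> quantile (F n) q \<le> 1 + log \<rho> (2 * real n * (1 + ln (real n)) / - ln q)"
proof
  define L where "L = - ln q"
  have "L > 0" using assms by (simp add: L_def)
  have "ln (1 / 2) < ln q" using assms by (subst ln_less_cancel_iff) auto
  then have "L < 1" using ln_2_less_1 by (simp add: L_def ln_div)
  have "1 - q \<le> L" using ln_le_minus_one[of q] assms by (simp add: L_def)
  have "real n / (4 * L) = real n * (1 / 2) / (2 * L)" by simp
  also have "\<dots> \<le> real n * q / (2 * (1 - q))"
    using assms \<open>1 - q \<le> L\<close> by (intro frac_le mult_left_mono) auto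
  also have "\<dots> \<le> 1 + real n * q / (2 * (1 - q))" by simp
  finally have "log \<rho> (real n / (4 * L)) \<le> log \<rho> (1 + real n * q / (2 * (1 - q)))"
    using rho assms \<open>L > 0\<close>
    by (subst log_le_cancel_iff) (auto intro!: add_pos_nonneg divide_nonneg_pos)
  then show "1 + log \<rho> (real n / (4 * - ln q)) \<le> quantile (F n) q"
    using le_quantile_near_1[of n q] assms by (simp add: L_def)
  define c where "c = real n * (1 + ln (real n))"
  have "1 * 1 \<le> c" unfolding c_def using assms by (intro mult_mono) auto
  then have "1 \<le> c" by simp
  then have "1 + c / L \<le> 2 * c / L" using \<open>L < 1\<close> \<open>L > 0\<close> by (simp add: field_simps)
  then have "log \<rho> (1 + c / L) \<le> log \<rho> (2 * c / L)"
    using rho \<open>L > 0\<close> \<open>1 \<le> c\<close> by (subst log_le_cancel_iff) (auto intro: add_pos_nonneg)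
  then show "quantile (F n) q \<le> 1 + log \<rho> (2 * real n * (1 + ln (real n)) / - ln q)"
    using quantile_le[of n q] assms by (simp add: L_def c_def mult.assoc)
qed

end

lemma log_approx_equiv_sequentially:
  fixes \<rho> L :: real
  assumes "\<rho> > 1" and "L > 0"
  shows "(\<lambda>n. log \<rho> ((real n * ln (real n - 1) + L) / L) + 1) \<sim>[sequentially] (\<lambda>n. log \<rho> (real n))"
    and "(\<lambda>n. log \<rho> (real n) - log \<rho> L) \<sim>[sequentially] (\<lambda>n. log \<rho> (real n))"
  using assms unfolding log_def by real_asymp+

lemma log_approx_equiv_at_left_1:
  fixes \<rho> k :: real
  assumes "\<rho> > 1" and "k > 0"
  shows "(\<lambda>q. log \<rho> ((k + ln (1 / q)) / ln (1 / q)) + 1) \<sim>[at_left 1] (\<lambda>q. - log \<rho> (- ln q))"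
    and "(\<lambda>q. log \<rho> k - log \<rho> (- ln q)) \<sim>[at_left 1] (\<lambda>q. - log \<rho> (- ln q))"
  using assms unfolding log_def by real_asymp+

lemma log_approx_tendsto_at_right_0:
  fixes \<rho> k :: real
  assumes "\<rho> > 1" and "k \<ge> 0"
  shows "((\<lambda>q. log \<rho> ((k + ln (1 / q)) / ln (1 / q)) + 1) \<longlongrightarrow> 1) (at_right 0)"
  using assms unfolding log_def by real_asymp

lemma log_approx_log_band:
  fixes \<rho> q :: real and n :: nat
  assumes "\<rho> > 1" and "n \<ge> 3" and "1 / 2 < q" "q < 1"
  shows "1 + log \<rho> (real n / (4 * - ln q)) \<le> log \<rho> ((real n * ln (real n - 1) + ln (1 / q)) / ln (1 / q)) + 1
    \<and> log \<rho> ((real n * ln (real n - 1) + ln (1 / q)) / ln (1 / q)) + 1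
      \<le> 1 + log \<rho> (2 * real n * (1 + ln (real n)) / - ln q)"
proof -
  define L where "L = - ln q"
  define k where "k = real n * ln (real n - 1)"
  have "L > 0" using assms by (simp add: L_def)
  have "ln (1 / 2) < ln q" using assms by (subst ln_less_cancel_iff) auto
  then have "L < 1" using ln_2_less_1 by (simp add: L_def ln_div)
  have "ln (1 / q) = L" using assms by (simp add: L_def ln_div)
  have "ln 2 \<le> ln (real n - 1)" using assms(2) by simp
  then have "1 / 4 \<le> ln (real n - 1)" using ln2_ge_two_thirds by linarith
  then have "real n / 4 \<le> k" unfolding k_def using assms(2) by simp
  moreover have "k \<le> real n * ln (real n)"
    unfolding k_def using assms(2) by (intro mult_left_mono) auto
  moreover have "0 \<le> ln (real n)" using assms(2) by simp
  ultimately have lo: "real n / 4 \<le> k + L" and up: "k + L \<le> 2 * real n * (1 + ln (real n))"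
    using \<open>L > 0\<close> \<open>L < 1\<close> assms(2) by (auto simp: algebra_simps)
  have "real n / 4 / L \<le> (k + L) / L" "(k + L) / L \<le> 2 * real n * (1 + ln (real n)) / L"
    using lo up \<open>L > 0\<close> by (intro divide_right_mono; simp)+
  moreover have "0 < real n / 4 / L" using assms(2) \<open>L > 0\<close> by simp
  ultimately have "log \<rho> (real n / (4 * L)) \<le> log \<rho> ((k + L) / L)"
    "log \<rho> ((k + L) / L) \<le> log \<rho> (2 * real n * (1 + ln (real n)) / L)"
    using assms(1) by (auto intro!: log_mono)
  then show ?thesis by (simp add: \<open>ln (1 / q) = L\<close> k_def L_def)
qed

theorem theorem1:
  fixes M :: "nat \<Rightarrow> 'a measure" and X :: "nat \<Rightarrow> nat \<Rightarrow> 'a \<Rightarrow> real"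
    and l \<rho> :: real
  defines "F \<equiv> (\<lambda>n. cdf (distr (M n) borel (Mstat \<rho> n (X n))))"
  assumes prob: "\<And>n. prob_space (M n)"
    and indep: "\<And>n. prob_space.indep_vars (M n) (\<lambda>_. borel) (X n) {..<n}"
    and expo: "\<And>n i. i < n \<Longrightarrow> distributed (M n) lborel (X n i) (exponential_density l)"
    and lam: "l > 0" and rho: "\<rho> > 1"
  shows
    "(\<forall>n\<ge>2. \<forall>\<mu>>1.
        F n \<mu> = (real n - 1) * Beta ((\<rho> powr (\<mu> - 1) + real n - 1) / (\<rho> powr (\<mu> - 1) - 1)) (real n - 1))
   \<and> (\<forall>n\<ge>2. \<forall>\<mu>>1.
        (F n has_real_derivative
          (real n * \<rho> powr (\<mu> - 1) * F n \<mu> * ln \<rho> / (\<rho> powr (\<mu> - 1) - 1)\<^sup>2 *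
            (Digamma (real n * \<rho> powr (\<mu> - 1) / (\<rho> powr (\<mu> - 1) - 1))
             - Digamma ((\<rho> powr (\<mu> - 1) + real n - 1) / (\<rho> powr (\<mu> - 1) - 1))))) (at \<mu>))
   \<and> (let Q = (\<lambda>n q. quantile (F n) q);
          A = (\<lambda>n q. log \<rho> ((real n * ln (real n - 1) + ln (1 / q)) / ln (1 / q)) + 1);
          B = (\<lambda>n q. log \<rho> (real n) - log \<rho> (- ln q))
      in
        (\<forall>q\<in>{0<..<1}. (\<lambda>n. Q n q) \<sim>[sequentially] (\<lambda>n. A n q)
                       \<and> (\<lambda>n. A n q) \<sim>[sequentially] (\<lambda>n. B n q))
      \<and> (\<forall>n\<ge>3. (Q n) \<sim>[at_left 1] (A n) \<and> (A n) \<sim>[at_left 1] (B n))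
      \<and> ((\<lambda>(n, q). Q n q) \<sim>[sequentially \<times>\<^sub>F at_left 1] (\<lambda>(n, q). A n q)
         \<and> (\<lambda>(n, q). A n q) \<sim>[sequentially \<times>\<^sub>F at_left 1] (\<lambda>(n, q). B n q))
      \<and> (\<forall>n\<ge>2. (Q n) \<sim>[at_right 0] (A n)))"
proof -
  have cdf: "F n \<mu> = spread_cdf n (real n / (\<rho> powr (\<mu> - 1) - 1))" if "n \<ge> 2" "\<mu> > 1" for n \<mu>
    unfolding F_def using cdf_Mstat_exponential[OF prob indep expo lam rho _ that(2)] that(1) by simp
  have "mono (F n)" for n
  proof -
    have "Mstat \<rho> n (X n) \<in> borel_measurable (M n)"
      using distributed_measurable[OF expo] by (intro Mstat_measurable) simp
    then interpret real_distribution "distr (M n) borel (Mstat \<rho> n (X n))"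
      by (rule prob_space.real_distribution_distr[OF prob])
    show ?thesis unfolding F_def by (intro monoI cdf_nondecreasing)
  qed
  then interpret spread_cdf_family \<rho> F using rho cdf by unfold_locales
  have Beta: "F n \<mu> = (real n - 1) * Beta ((\<rho> powr (\<mu> - 1) + real n - 1) / (\<rho> powr (\<mu> - 1) - 1)) (real n - 1)"
    if "n \<ge> 2" "\<mu> > 1" for n \<mu>
    using cdf[OF that] spread_cdf_eq_Beta_powr[OF rho that(2,1)] by simp
  note equiv_via = asymp_equiv_trans[OF _ asymp_equiv_symI]
  \<comment> \<open>Goals: 1 distribution function, 2 density; then \<open>Q \<sim> A\<close> and \<open>A \<sim> B\<close> for \<open>n \<rightarrow> \<infinity>\<close> (3, 4),
    for \<open>q \<rightarrow> 1\<close> (5, 6) and jointly (7, 8); finally \<open>Q \<sim> A\<close> for \<open>q \<rightarrow> 0\<close> (9).\<close>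
  show ?thesis unfolding Let_def
  proof (intro conjI allI impI ballI, goal_cases)
    case (1 n \<mu>) then show ?case by (rule Beta)
  next
    case (2 n \<mu>) then show ?case by (intro has_real_derivative_Beta_cdf[OF Beta[OF \<open>n \<ge> 2\<close>] rho])
  next
    case (3 q) then have "ln (1 / q) > 0" by (simp add: ln_div)
    with 3 show ?case
      by (auto intro: equiv_via[OF quantile_equiv_sequentially log_approx_equiv_sequentially(1)[OF rho]])
  next
    case (4 q) then have "ln (1 / q) > 0" "- ln q > 0" by (simp_all add: ln_div)
    then show ?case
      by (intro equiv_via[OF log_approx_equiv_sequentially(1)[OF rho] log_approx_equiv_sequentially(2)[OF rho]])
  next
    case (5 n) then show ?case
      by (auto intro: equiv_via[OF quantile_equiv_at_left_1 log_approx_equiv_at_left_1(1)[OF rho]])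
  next
    case (6 n) then show ?case
      by (auto intro: equiv_via[OF log_approx_equiv_at_left_1[OF rho]])
  next
    case 7 show ?case
      by (rule equiv_via[OF asymp_equiv_joint_of_log_band[OF rho] asymp_equiv_joint_of_log_band[OF rho]])
         (use quantile_log_band log_approx_log_band[OF rho] in auto)
  next
    case 8 show ?case
      by (rule asymp_equiv_joint_of_log_band[OF rho]) (use log_approx_log_band[OF rho] in auto)
  next
    case (9 n)
    then have "real n * ln (real n - 1) \<ge> 0" by simp
    from tendsto_imp_asymp_equiv_const[OF quantile_tendsto_at_right_0[OF 9] one_neq_zero]
      tendsto_imp_asymp_equiv_const[OF log_approx_tendsto_at_right_0[OF rho this] one_neq_zero]
    show ?case by (rule equiv_via)
  qed
qed

end
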